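(* Let $a\in[0,\infty)$, let $\theta:[0,1]\to[0,\infty]$ be a continuous and decreasing function that is not strictly decreasing, and let $\vartheta:[0,\infty]\to[0,1]$ be a continuous and decreasing function such that $O_{\theta,\vartheta}(x,y)=\vartheta(\theta(x)+\theta(y))$ defines an overlap function on $[0,1]^2$ and at least one of the following holds: (1) $\theta(x)=\frac{a}{2}$ if and only if $x=1$; (2) $\vartheta(x)=1$ if and only if $x\in[0,a]$. Then there do not exist a positive continuous t-norm $T$ and a pseudo automorphism $\mathcal{F}$ such that $O_{\theta,\vartheta}(x,y)=\mathcal{F}(T(x,y))$ for all $(x,y)\in[0,1]^2$.
   Context: "Decreasing" means non-increasing and "increasing" means non-decreasing. Arithmetic in $[0,\infty]$ uses $c+\infty=\infty$; continuity on $[0,\infty]$ refers to the usual topology of the extended half-line. An overlap function is a map $O:[0,1]^2\to[0,1]$ that is (O1) commutative, (O2) $O(x,y)=0$ iff $xy=0$, (O3) $O(x,y)=1$ iff $xy=1$, (O4) increasing in each variable, (O5) continuous. A t-norm is a commutative, associative map $T:[0,1]^2\to[0,1]$, increasing in each variable, with $T(x,1)=x$; it is positive if $T(x,y)=0$ implies $x=0$ or $y=0$. A pseudo automorphism is a continuous increasing map $\mathcal{F}:[0,1]\to[0,1]$ with $\mathcal{F}(x)=1$ iff $x=1$ and $\mathcal{F}(x)=0$ iff $x=0$. *)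

theory Defs
  imports "HOL-Analysis.Analysis" "HOL-Library.Extended_Nonnegative_Real"
begin

text \<open>The extended half-line [0,\<infinity>] is modelled by ennreal.
  Functions on [0,1] are real \<Rightarrow> real, only their values on [0,1] matter.\<close>

definition overlap :: "(real \<Rightarrow> real \<Rightarrow> real) \<Rightarrow> bool" where
  "overlap Ov \<longleftrightarrow>
     (\<forall>x\<in>{0..1}. \<forall>y\<in>{0..1}. Ov x y \<in> {0..1}) \<and>
     (\<forall>x\<in>{0..1}. \<forall>y\<in>{0..1}. Ov x y = Ov y x) \<and>
     (\<forall>x\<in>{0..1}. \<forall>y\<in>{0..1}. Ov x y = 0 \<longleftrightarrow> x * y = 0) \<and>
     (\<forall>x\<in>{0..1}. \<forall>y\<in>{0..1}. Ov x y = 1 \<longleftrightarrow> x * y = 1) \<and>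
     (\<forall>x\<in>{0..1}. \<forall>y\<in>{0..1}. \<forall>z\<in>{0..1}. y \<le> z \<longrightarrow> Ov x y \<le> Ov x z \<and> Ov y x \<le> Ov z x) \<and>
     continuous_on ({0..1} \<times> {0..1}) (\<lambda>(x, y). Ov x y)"

definition tnorm :: "(real \<Rightarrow> real \<Rightarrow> real) \<Rightarrow> bool" where
  "tnorm T \<longleftrightarrow>
     (\<forall>x\<in>{0..1}. \<forall>y\<in>{0..1}. T x y \<in> {0..1}) \<and>
     (\<forall>x\<in>{0..1}. \<forall>y\<in>{0..1}. T x y = T y x) \<and>
     (\<forall>x\<in>{0..1}. \<forall>y\<in>{0..1}. \<forall>z\<in>{0..1}. T x (T y z) = T (T x y) z) \<and>
     (\<forall>x\<in>{0..1}. \<forall>y\<in>{0..1}. \<forall>z\<in>{0..1}. y \<le> z \<longrightarrow> T x y \<le> T x z \<and> T y x \<le> T z x) \<and>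
     (\<forall>x\<in>{0..1}. T x 1 = x)"

definition positive_tnorm :: "(real \<Rightarrow> real \<Rightarrow> real) \<Rightarrow> bool" where
  "positive_tnorm T \<longleftrightarrow> tnorm T \<and>
     (\<forall>x\<in>{0..1}. \<forall>y\<in>{0..1}. T x y = 0 \<longrightarrow> x = 0 \<or> y = 0)"

definition pseudo_automorphism :: "(real \<Rightarrow> real) \<Rightarrow> bool" where
  "pseudo_automorphism F \<longleftrightarrow>
     (\<forall>x\<in>{0..1}. F x \<in> {0..1}) \<and>
     continuous_on {0..1} F \<and> mono_on {0..1} F \<and>
     (\<forall>x\<in>{0..1}. F x = 1 \<longleftrightarrow> x = 1) \<and>
     (\<forall>x\<in>{0..1}. F x = 0 \<longleftrightarrow> x = 0)"

end

theory Submission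
  imports Defs
begin

(* Write O(x,y) = F (T x y). A flat piece l < u of \<theta> gives F (T l y) = F (T u y) for all y.
   With p > 0 the least point of the level set of F through u, solving T u y = p and T u w = l
   yields w < 1 with T p w = p; the least x with T p x = p is then an idempotent e of T with
   0 < e < 1. Such an e is a unit on [0,e], so O(e,x) = O(1,x) for x \<le> e. Through \<phi> this says
   that \<phi> is invariant under the shift by \<theta> e - \<theta> 1 > 0 on [\<theta> 1 + \<theta> e, \<theta> 1 + \<theta> x], and a
   decreasing function with that property takes the same value at both ends; choosing x \<le> e
   with O(1,x) = O(1,e)/2 gives a contradiction. *)

lemma continuous_on_section:
  assumes "continuous_on (A \<times> B) (\<lambda>(x, y). f x y)" and "u \<in> A"
  shows "continuous_on B (f u)"
proof -
  have "continuous_on B (\<lambda>y. (u, y))"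
    by (intro continuous_intros)
  from continuous_on_compose2[OF assms(1) this] assms(2) show ?thesis
    by (auto simp: eta_contract_eq)
qed

lemma closed_real_set_has_least:
  fixes S :: "real set"
  assumes "closed S" and "bdd_below S" and "z \<in> S"
  obtains m where "m \<in> S" and "\<And>x. x \<in> S \<Longrightarrow> m \<le> x"
proof
  show "Inf S \<in> S" and "\<And>x. x \<in> S \<Longrightarrow> Inf S \<le> x"
    using assms by (auto intro: closed_contains_Inf cInf_lower)
qed

lemma antimono_shift_invariant_eq:
  fixes \<psi> :: "real \<Rightarrow> real"
  assumes antimono: "\<And>s t. s \<le> t \<Longrightarrow> \<psi> t \<le> \<psi> s"
    and "D > 0" and "a \<le> b"
    and shift: "\<And>r. r \<in> {a..b} \<Longrightarrow> \<psi> (r + D) = \<psi> r"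
  shows "\<psi> b = \<psi> a"
proof -
  have iterate: "a + real n * D \<le> b + D \<Longrightarrow> \<psi> (a + real n * D) = \<psi> a" for n
  proof (induction n)
    case (Suc n)
    then have n: "a + real n * D \<in> {a..b}"
      using \<open>D > 0\<close> by (simp add: algebra_simps)
    then have "\<psi> (a + real n * D + D) = \<psi> (a + real n * D)"
      by (rule shift)
    also have "\<dots> = \<psi> a"
      using Suc.IH n \<open>D > 0\<close> by simp
    finally show ?case
      by (simp add: algebra_simps)
  qed simp
  define n where "n = nat \<lceil>(b - a) / D\<rceil>"
  have "(b - a) / D \<ge> 0"
    using \<open>D > 0\<close> \<open>a \<le> b\<close> by simp
  then have "(b - a) / D \<le> real n" and "real n < (b - a) / D + 1"
    unfolding n_def by linarith+
  then have "b - a \<le> real n * D" and "real n * D < b - a + D"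
    using \<open>D > 0\<close> by (simp_all add: field_simps)
  then have "\<psi> a \<le> \<psi> b"
    using iterate[of n] antimono[of b "a + real n * D"] by simp
  with antimono[OF \<open>a \<le> b\<close>] show ?thesis
    by simp
qed

context
  fixes T :: "real \<Rightarrow> real \<Rightarrow> real"
  assumes T: "tnorm T"
begin

lemma tnorm_range: "x \<in> {0..1} \<Longrightarrow> y \<in> {0..1} \<Longrightarrow> T x y \<in> {0..1}"
  and tnorm_commute: "x \<in> {0..1} \<Longrightarrow> y \<in> {0..1} \<Longrightarrow> T x y = T y x"
  and tnorm_assoc:
    "x \<in> {0..1} \<Longrightarrow> y \<in> {0..1} \<Longrightarrow> z \<in> {0..1} \<Longrightarrow> T x (T y z) = T (T x y) z"
  and tnorm_mono_right:
    "x \<in> {0..1} \<Longrightarrow> y \<in> {0..1} \<Longrightarrow> z \<in> {0..1} \<Longrightarrow> y \<le> z \<Longrightarrow> T x y \<le> T x z"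
  and tnorm_one_right: "x \<in> {0..1} \<Longrightarrow> T x 1 = x"
  using T unfolding tnorm_def by blast+

lemma tnorm_one_left: "x \<in> {0..1} \<Longrightarrow> T 1 x = x"
  using tnorm_commute[of 1 x] tnorm_one_right[of x] by simp

lemma tnorm_le_left: "x \<in> {0..1} \<Longrightarrow> y \<in> {0..1} \<Longrightarrow> T x y \<le> x"
  using tnorm_mono_right[of x y 1] tnorm_one_right[of x] by simp

lemma tnorm_le_right: "x \<in> {0..1} \<Longrightarrow> y \<in> {0..1} \<Longrightarrow> T x y \<le> y"
  using tnorm_le_left[of y x] tnorm_commute[of x y] by simp

lemma tnorm_zero_right: "x \<in> {0..1} \<Longrightarrow> T x 0 = 0"
  using tnorm_le_right[of x 0] tnorm_range[of x 0] by simp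

context
  assumes T_cont: "continuous_on ({0..1} \<times> {0..1}) (\<lambda>(x, y). T x y)"
begin

lemma tnorm_section_onto:
  assumes "u \<in> {0..1}" and "z \<in> {0..u}"
  obtains y where "y \<in> {0..1}" and "T u y = z"
proof -
  have "continuous_on {0..1} (T u)"
    using continuous_on_section[OF T_cont assms(1)] .
  then obtain y where "0 \<le> y" "y \<le> 1" "T u y = z"
    using IVT'[of "T u" 0 z 1] assms tnorm_zero_right[of u] tnorm_one_right[of u] by auto
  then show thesis
    using that by simp
qed

lemma tnorm_idempotent_unit:
  assumes "e \<in> {0..1}" and "T e e = e" and "x \<in> {0..e}"
  shows "T e x = x"
proof -
  obtain t where t: "t \<in> {0..1}" "T e t = x"
    using tnorm_section_onto assms(1,3) by blast
  have "T e x = T (T e e) t"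
    using t assms(1) tnorm_assoc[of e e t] by simp
  then show ?thesis
    using t assms(2) by simp
qed

lemma tnorm_idempotent_above:
  assumes "p \<in> {0..1}" and "w \<in> {0..1}" and "w < 1" and "T p w = p"
  obtains e where "p \<le> e" and "e < 1" and "T e e = e"
proof -
  define A where "A = {x \<in> {0..1}. T p x = p}"
  have "closed A"
    unfolding A_def
    by (rule continuous_closed_preimage_constant[OF continuous_on_section[OF T_cont assms(1)]])
      simp
  then obtain e where "e \<in> A" and least: "\<And>x. x \<in> A \<Longrightarrow> e \<le> x"
    by (rule closed_real_set_has_least) (use assms in \<open>auto simp: A_def bdd_below_def\<close>)
  then have e: "e \<in> {0..1}" and Tpe: "T p e = p"
    by (auto simp: A_def)
  have "e < 1"
    using least[of w] assms by (simp add: A_def)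
  have "p \<le> e"
    using tnorm_le_right[OF assms(1) e] Tpe by simp
  have "T p (T e e) = p"
    using tnorm_assoc[OF assms(1) e e] Tpe by simp
  then have "e \<le> T e e"
    using least tnorm_range[OF e e] by (simp add: A_def)
  then have "T e e = e"
    using tnorm_le_left[OF e e] by simp
  with \<open>p \<le> e\<close> \<open>e < 1\<close> show thesis
    using that by blast
qed

lemma tnorm_idempotent_of_flat_composition:
  fixes F :: "real \<Rightarrow> real"
  assumes F_cont: "continuous_on {0..1} F"
    and F_zero: "\<And>z. z \<in> {0..1} \<Longrightarrow> F z = 0 \<longleftrightarrow> z = 0"
    and lu: "l \<in> {0..1}" "u \<in> {0..1}" "l < u"
    and flat: "\<And>y. y \<in> {0..1} \<Longrightarrow> F (T l y) = F (T u y)"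
  obtains e where "0 < e" and "e < 1" and "T e e = e"
proof -
  define S where "S = {z \<in> {0..1}. F z = F u}"
  have "F l = F u"
    using flat[of 1] lu tnorm_one_right by simp
  then have "l \<in> S"
    using lu by (simp add: S_def)
  moreover have "closed S"
    unfolding S_def by (rule continuous_closed_preimage_constant[OF F_cont]) simp
  moreover have "bdd_below S"
    by (auto simp: S_def bdd_below_def)
  ultimately obtain p where "p \<in> S" and least: "\<And>z. z \<in> S \<Longrightarrow> p \<le> z"
    using closed_real_set_has_least by blast
  then have p: "p \<in> {0..1}" "F p = F u" and "p \<le> l"
    using \<open>l \<in> S\<close> by (auto simp: S_def)
  have "p > 0"
    using p F_zero[of p] F_zero[of u] lu by force
  obtain y where y: "y \<in> {0..1}" "T u y = p"
    using tnorm_section_onto[of u p] lu p \<open>p \<le> l\<close> by auto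
  have "T l y \<in> S"
    using flat[OF y(1)] y p tnorm_range[OF lu(1) y(1)] by (simp add: S_def)
  moreover have "T l y \<le> p"
    using tnorm_mono_right[OF y(1) lu(1,2)] tnorm_commute y lu by (simp add: less_imp_le)
  ultimately have Tly: "T l y = p"
    using least by force
  obtain w where w: "w \<in> {0..1}" "T u w = l"
    using tnorm_section_onto[of u l] lu by auto
  have "w < 1"
    using w lu tnorm_one_right[of u] by (cases "w = 1") auto
  have "T p w = T w (T u y)"
    using y w tnorm_commute[OF p(1) w(1)] by simp
  also have "\<dots> = T l y"
    using tnorm_assoc[OF w(1) lu(2) y(1)] tnorm_commute[OF w(1) lu(2)] w by simp
  finally obtain e where "p \<le> e" "e < 1" "T e e = e"
    using tnorm_idempotent_above[OF p(1) w(1) \<open>w < 1\<close>] Tly by blast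
  with \<open>p > 0\<close> show thesis
    by (intro that[of e]) auto
qed

end

end

lemma additive_overlap_generator_finite:
  fixes \<theta> :: "real \<Rightarrow> ennreal" and \<phi> :: "ennreal \<Rightarrow> real"
  assumes \<phi>_antimono: "\<And>s t. s \<le> t \<Longrightarrow> \<phi> t \<le> \<phi> s"
    and overlap: "overlap (\<lambda>x y. \<phi> (\<theta> x + \<theta> y))"
    and x: "x \<in> {0<..1}"
  shows "\<theta> x \<noteq> \<infinity>"
proof
  assume "\<theta> x = \<infinity>"
  then have "\<phi> (\<theta> x + \<theta> x) \<le> \<phi> (\<theta> 0 + \<theta> 1)"
    by (intro \<phi>_antimono) simp
  moreover have "\<phi> (\<theta> 0 + \<theta> 1) = 0" and "\<phi> (\<theta> x + \<theta> x) \<in> {0..1}"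
    and "\<phi> (\<theta> x + \<theta> x) \<noteq> 0"
    using overlap x unfolding overlap_def by auto
  ultimately show False
    by simp
qed

lemma additive_local_unit_const:
  fixes \<theta> :: "real \<Rightarrow> ennreal" and \<phi> :: "ennreal \<Rightarrow> real"
  assumes \<theta>_cont: "continuous_on {0..1} \<theta>"
    and \<theta>_antimono: "\<And>x y. x \<in> {0..1} \<Longrightarrow> y \<in> {0..1} \<Longrightarrow> x \<le> y \<Longrightarrow> \<theta> y \<le> \<theta> x"
    and \<phi>_antimono: "\<And>s t. s \<le> t \<Longrightarrow> \<phi> t \<le> \<phi> s"
    and "0 \<le> x" "x \<le> e" "e \<le> 1" and "\<theta> 1 < \<theta> e" and "\<theta> x \<noteq> \<infinity>"
    and unit: "\<And>x. x \<in> {0..e} \<Longrightarrow> \<phi> (\<theta> e + \<theta> x) = \<phi> (\<theta> 1 + \<theta> x)"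
  shows "\<phi> (\<theta> 1 + \<theta> x) = \<phi> (\<theta> 1 + \<theta> e)"
proof -
  have "\<theta> e \<le> \<theta> x"
    using \<theta>_antimono[of x e] assms(4-6) by auto
  with assms(7,8) obtain tb te tx where
    tb: "\<theta> 1 = ennreal tb" "tb \<ge> 0" and te: "\<theta> e = ennreal te" and tx: "\<theta> x = ennreal tx"
    and "tb < te" "te \<le> tx"
    by (cases "\<theta> 1"; cases "\<theta> e"; cases "\<theta> x") (auto simp: top_unique ennreal_less_iff)
  define \<psi> where "\<psi> r = \<phi> (ennreal r)" for r
  have "\<psi> (tb + tx) = \<psi> (tb + te)"
  proof (rule antimono_shift_invariant_eq[where \<psi> = \<psi> and D = "te - tb"])
    show "\<psi> t \<le> \<psi> s" if "s \<le> t" for s t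
      unfolding \<psi>_def using that by (intro \<phi>_antimono ennreal_leI)
    fix r
    assume r: "r \<in> {tb + te..tb + tx}"
    have "\<theta> e \<le> ennreal (r - tb)" and "ennreal (r - tb) \<le> \<theta> x"
      using r te tx by (auto intro: ennreal_leI)
    then obtain x' where "x \<le> x'" "x' \<le> e" "\<theta> x' = ennreal (r - tb)"
      using IVT2'[of \<theta> e "ennreal (r - tb)" x] continuous_on_subset[OF \<theta>_cont, of "{x..e}"]
        assms(4-6) by auto
    then have "\<phi> (\<theta> e + ennreal (r - tb)) = \<phi> (\<theta> 1 + ennreal (r - tb))"
      using unit[of x'] assms(4) by auto
    then show "\<psi> (r + (te - tb)) = \<psi> r"
      using r tb te \<open>tb < te\<close> by (simp add: \<psi>_def ennreal_plus[symmetric] algebra_simps)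
  qed (use \<open>tb < te\<close> \<open>te \<le> tx\<close> in auto)
  then show ?thesis
    using tb te tx \<open>tb < te\<close> \<open>te \<le> tx\<close> by (simp add: \<psi>_def ennreal_plus)
qed

lemma additive_overlap_no_local_unit:
  fixes \<theta> :: "real \<Rightarrow> ennreal" and \<phi> :: "ennreal \<Rightarrow> real"
  assumes \<theta>_cont: "continuous_on {0..1} \<theta>"
    and \<theta>_antimono: "\<And>x y. x \<in> {0..1} \<Longrightarrow> y \<in> {0..1} \<Longrightarrow> x \<le> y \<Longrightarrow> \<theta> y \<le> \<theta> x"
    and \<phi>_antimono: "\<And>s t. s \<le> t \<Longrightarrow> \<phi> t \<le> \<phi> s"
    and overlap: "overlap (\<lambda>x y. \<phi> (\<theta> x + \<theta> y))"
    and e: "0 < e" "e < 1"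
    and unit: "\<And>x. x \<in> {0..e} \<Longrightarrow> \<phi> (\<theta> e + \<theta> x) = \<phi> (\<theta> 1 + \<theta> x)"
  shows False
proof -
  have O_range: "\<And>x y. x \<in> {0..1} \<Longrightarrow> y \<in> {0..1} \<Longrightarrow> \<phi> (\<theta> x + \<theta> y) \<in> {0..1}"
    and O_zero: "\<And>x y. x \<in> {0..1} \<Longrightarrow> y \<in> {0..1} \<Longrightarrow> \<phi> (\<theta> x + \<theta> y) = 0 \<longleftrightarrow> x * y = 0"
    and O_one: "\<And>x y. x \<in> {0..1} \<Longrightarrow> y \<in> {0..1} \<Longrightarrow> \<phi> (\<theta> x + \<theta> y) = 1 \<longleftrightarrow> x * y = 1"
    and O_cont: "continuous_on ({0..1} \<times> {0..1}) (\<lambda>(x, y). \<phi> (\<theta> x + \<theta> y))"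
    using overlap unfolding overlap_def by blast+
  define G where "G x = \<phi> (\<theta> 1 + \<theta> x)" for x
  have "continuous_on {0..1} G"
    using continuous_on_section[of "{0..1}" "{0..1}" "\<lambda>x y. \<phi> (\<theta> x + \<theta> y)" 1] O_cont
    by (simp add: G_def)
  then have "continuous_on {0..e} G"
    by (rule continuous_on_subset) (use e in auto)
  moreover have "G e > 0" and "G 0 = 0"
    using O_range[of 1 e] O_zero[of 1 e] O_zero[of 1 0] e by (auto simp: G_def)
  ultimately obtain x where x: "0 \<le> x" "x \<le> e" "G x = G e / 2"
    using IVT'[of G 0 "G e / 2" e] e by auto
  then have "x \<in> {0<..1}"
    using e \<open>G 0 = 0\<close> \<open>G e > 0\<close> by (auto simp: le_less)
  have "\<theta> 1 \<le> \<theta> e"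
    using \<theta>_antimono[of e 1] e by auto
  moreover have "\<theta> e \<noteq> \<theta> 1"
    using O_one[of e 1] O_one[of 1 1] e by auto
  ultimately have "G x = G e"
    using additive_local_unit_const[OF \<theta>_cont \<theta>_antimono \<phi>_antimono x(1,2) _ _ _ unit]
      additive_overlap_generator_finite[OF \<phi>_antimono overlap \<open>x \<in> {0<..1}\<close>] e
    by (simp add: G_def add.commute)
  with x \<open>G e > 0\<close> show False
    by simp
qed

theorem proposition5p2:
  fixes a :: real and \<theta> :: "real \<Rightarrow> ennreal" and \<phi> :: "ennreal \<Rightarrow> real"
  assumes "a \<ge> 0"
    and "continuous_on {0..1} \<theta>"
    and "\<forall>x\<in>{0..1}. \<forall>y\<in>{0..1}. x \<le> y \<longrightarrow> \<theta> y \<le> \<theta> x"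
    and "\<exists>x\<in>{0..1}. \<exists>y\<in>{0..1}. x < y \<and> \<theta> x = \<theta> y"
    and "continuous_on UNIV \<phi>"
    and "\<forall>s t. s \<le> t \<longrightarrow> \<phi> t \<le> \<phi> s"
    and "\<forall>t. \<phi> t \<in> {0..1}"
    and "overlap (\<lambda>x y. \<phi> (\<theta> x + \<theta> y))"
    and "(\<forall>x\<in>{0..1}. \<theta> x = ennreal (a / 2) \<longleftrightarrow> x = 1) \<or>
         (\<forall>t. \<phi> t = 1 \<longleftrightarrow> t \<in> {0..ennreal a})"
  shows "\<not> (\<exists>T F. positive_tnorm T \<and> continuous_on ({0..1} \<times> {0..1}) (\<lambda>(x, y). T x y) \<and>
              pseudo_automorphism F \<and>
              (\<forall>x\<in>{0..1}. \<forall>y\<in>{0..1}. \<phi> (\<theta> x + \<theta> y) = F (T x y)))"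
proof
  assume "\<exists>T F. positive_tnorm T \<and> continuous_on ({0..1} \<times> {0..1}) (\<lambda>(x, y). T x y) \<and>
              pseudo_automorphism F \<and>
              (\<forall>x\<in>{0..1}. \<forall>y\<in>{0..1}. \<phi> (\<theta> x + \<theta> y) = F (T x y))"
  then obtain T F where T: "tnorm T" and T_cont: "continuous_on ({0..1} \<times> {0..1}) (\<lambda>(x, y). T x y)"
    and F: "pseudo_automorphism F"
    and rep: "\<And>x y. x \<in> {0..1} \<Longrightarrow> y \<in> {0..1} \<Longrightarrow> \<phi> (\<theta> x + \<theta> y) = F (T x y)"
    unfolding positive_tnorm_def by blast
  have F_cont: "continuous_on {0..1} F" and F_zero: "\<And>z. z \<in> {0..1} \<Longrightarrow> F z = 0 \<longleftrightarrow> z = 0"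
    using F unfolding pseudo_automorphism_def by blast+
  obtain l u where lu: "l \<in> {0..1}" "u \<in> {0..1}" "l < u" and "\<theta> l = \<theta> u"
    using assms(4) by blast
  then obtain e where e: "0 < e" "e < 1" "T e e = e"
    using tnorm_idempotent_of_flat_composition[OF T T_cont F_cont F_zero lu] rep by metis
  have "\<phi> (\<theta> e + \<theta> x) = \<phi> (\<theta> 1 + \<theta> x)" if "x \<in> {0..e}" for x
    using rep tnorm_idempotent_unit[OF T T_cont, of e x] tnorm_one_left[OF T, of x] that e by auto
  then show False
    using additive_overlap_no_local_unit[OF assms(2) _ _ assms(8) e(1,2)] assms(3,6) by blast
qed

end
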